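(* Let $k$ be a field of characteristic $0$, $L/k$ a field extension, and $S\in\mathbf{Fam}_L$ with data $a,b,t_0\in L$ (see context). Then $S$ contains a family of trisections defined over $L$ with a single free parameter $\gamma$, namely curves on $\mathcal{E}$ of the form $y=axt+bx+c(\gamma)t^3+d(\gamma)t^2+e(\gamma)t+\gamma$ with $c(\gamma),d(\gamma),e(\gamma)\in L$, each of which has a triple singularity at the point $Q=\big((at_0+b)^2/3,\ (at_0+b)^3/6+f(t_0)/(2(at_0+b)),\ t_0\big)$.
   Context: $S$ is a del Pezzo surface of degree one given in $\mathbb{P}(2,3,1,1)$, coordinates $(X:Y:Z:W)$, by $Y^2=X^3+F(Z,W)X+G(Z,W)$ with $F,G\in k[Z,W]$ homogeneous of degrees $4,6$; $f(t)=F(t,1)$, $g(t)=G(t,1)$; $\mathcal{E}:y^2=x^3+f(t)x+g(t)$ is the rational elliptic surface obtained by blowing up the base point of $|-K_S|$ ($t=Z/W$). A trisection is a member of $|-3K_S|$, realized on $\mathcal{E}$ as a curve $y=\alpha xt+\beta x+ct^3+dt^2+et+h$. $S\in\mathbf{Fam}_L$ means there exist $a,b,t_0\in L$ with $t_0\neq0$, $at_0+b\neq0$, $f(t_0)\neq-(at_0+b)^4/3$, such that $t_0$ is a double root of $P(t)=-f(t)^2/4+(at+b)^4f(t)/6+(at+b)^2g(t)+(at+b)^8/108$. *)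

theory Defs
  imports "HOL-Computational_Algebra.Polynomial"
begin

text \<open>K is a subfield of the ambient field (the base field k inside L).\<close>
definition is_subfield :: "'a::field set \<Rightarrow> bool" where
  "is_subfield K \<longleftrightarrow> 0 \<in> K \<and> 1 \<in> K \<and>
     (\<forall>x\<in>K. \<forall>y\<in>K. x + y \<in> K \<and> x * y \<in> K) \<and>
     (\<forall>x\<in>K. - x \<in> K) \<and> (\<forall>x\<in>K. x \<noteq> 0 \<longrightarrow> inverse x \<in> K)"

definition Fam_poly :: "'a::field_char_0 poly \<Rightarrow> 'a poly \<Rightarrow> 'a \<Rightarrow> 'a \<Rightarrow> 'a poly" where
  "Fam_poly f g a b =
     (let l = [:b, a:] in
      smult (- 1 / 4) (f ^ 2) + smult (1 / 6) (l ^ 4 * f) + l ^ 2 * g + smult (1 / 108) (l ^ 8))"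

text \<open>Membership of S in Fam_L witnessed by data a, b, t0 (t0 a double root of P).\<close>
definition Fam_data :: "'a::field_char_0 poly \<Rightarrow> 'a poly \<Rightarrow> 'a \<Rightarrow> 'a \<Rightarrow> 'a \<Rightarrow> bool" where
  "Fam_data f g a b t0 \<longleftrightarrow> t0 \<noteq> 0 \<and> a * t0 + b \<noteq> 0 \<and>
     poly f t0 \<noteq> - ((a * t0 + b) ^ 4) / 3 \<and> [:- t0, 1:] ^ 2 dvd Fam_poly f g a b"

text \<open>Bivariate polynomials in (x,t): outer variable t, coefficients are polynomials in x.\<close>
definition eval2 :: "'a::comm_ring_1 poly poly \<Rightarrow> 'a \<Rightarrow> 'a \<Rightarrow> 'a" where
  "eval2 P x t = poly (poly P [:t:]) x"

text \<open>The trisection y = al x t + be x + c t^3 + d t^2 + e t + h, as h(x,t) in L[x][t].\<close>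
definition trisec_h :: "'a::comm_ring_1 \<Rightarrow> 'a \<Rightarrow> 'a \<Rightarrow> 'a \<Rightarrow> 'a \<Rightarrow> 'a \<Rightarrow> 'a poly poly" where
  "trisec_h al be c d e h = [: [:h, be:], [:e, al:], [:d:], [:c:] :]"

text \<open>Plane model of the trisection on E (y eliminated): h(x,t)^2 - x^3 - f(t) x - g(t).\<close>
definition trisec_eqn :: "'a::comm_ring_1 \<Rightarrow> 'a \<Rightarrow> 'a \<Rightarrow> 'a \<Rightarrow> 'a \<Rightarrow> 'a \<Rightarrow> 'a poly \<Rightarrow> 'a poly \<Rightarrow> 'a poly poly" where
  "trisec_eqn al be c d e h f g =
     (trisec_h al be c d e h) ^ 2 - [: [:0, 0, 0, 1:] :]
     - map_poly (\<lambda>r. [:0, r:]) f - map_poly (\<lambda>r. [:r:]) g"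

text \<open>Multiplicity at least m at (x0,t0): all partial derivatives of order < m vanish (char 0).\<close>
definition mult_ge :: "'a::idom poly poly \<Rightarrow> nat \<Rightarrow> 'a \<Rightarrow> 'a \<Rightarrow> bool" where
  "mult_ge P m x0 t0 \<longleftrightarrow>
     (\<forall>i j. i + j < m \<longrightarrow> eval2 ((map_poly pderiv ^^ i) ((pderiv ^^ j) P)) x0 t0 = 0)"

definition triple_point :: "'a::idom poly poly \<Rightarrow> 'a \<Rightarrow> 'a \<Rightarrow> bool" where
  "triple_point P x0 t0 \<longleftrightarrow> mult_ge P 3 x0 t0 \<and> \<not> mult_ge P 4 x0 t0"

end

theory Submission
  imports Defs
begin

text \<open>
  Write the trisection as y = h(x, t) with h = (a t + b) x + m(t), where m is a cubic with
  constant term \<gamma>, and let F = h^2 - x^3 - f(t) x - g(t). Since the third x-derivative of F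
  is -6, Q is a triple point exactly when the six partial derivatives of F of order at most 2
  vanish at Q. With u = a t0 + b, the conditions on F_xx and F_x fix the coordinates
  x_Q = u^2/3 and y_Q = h(Q) = u^3/6 + f(t0)/(2u) of Q, and then F(Q) = -P(t0)/u^2.
  As y_Q \<noteq> 0 (this is where f(t0) \<noteq> -u^4/3 enters), the values m'(t0) and m''(t0) can be
  chosen to make F_t and F_tt vanish; for that choice u y_Q F_xt(Q) = P'(t0) once F(Q) = 0.
  Finally, since t0 \<noteq> 0, a cubic with any constant term \<gamma> can have any prescribed value
  and first two derivatives at t0.
\<close>

lemma poly_map_poly_pderiv_const: "poly (map_poly pderiv Q) [:t:] = pderiv (poly Q [:t:])"
  by (induction Q rule: pCons_induct)
    (auto simp: map_poly_pCons pderiv_add pderiv_mult pderiv_pCons pderiv_smult)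

lemma pderiv_map_poly_smult:
  "pderiv (map_poly (\<lambda>r. smult r p) f) = map_poly (\<lambda>r. smult r p) (pderiv (f :: 'a::idom poly))"
  by (rule poly_eqI) (simp add: coeff_map_poly coeff_pderiv of_nat_poly mult.commute)

lemma poly_map_poly_smult_const:
  "poly (map_poly (\<lambda>r. smult r p) f) [:t:] = smult (poly f t) (p :: 'a::comm_ring_1 poly)"
  by (induction f rule: pCons_induct) (auto simp: map_poly_pCons algebra_simps smult_add_left)

lemma not_mult_geI:
  assumes "eval2 ((map_poly pderiv ^^ i) ((pderiv ^^ j) P)) x t \<noteq> 0" "i + j < m"
  shows "\<not> mult_ge P m x t"
  using assms by (auto simp: mult_ge_def)

lemma mult_ge_3I:
  assumes "eval2 P x t = 0" "eval2 (map_poly pderiv P) x t = 0"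
    "eval2 (map_poly pderiv (map_poly pderiv P)) x t = 0" "eval2 (pderiv P) x t = 0"
    "eval2 (map_poly pderiv (pderiv P)) x t = 0" "eval2 (pderiv (pderiv P)) x t = 0"
  shows "mult_ge P 3 x t"
  unfolding mult_ge_def
proof (intro allI impI)
  fix i j :: nat assume "i + j < 3"
  then have "(i, j) \<in> {(0, 0), (1, 0), (2, 0), (0, 1), (1, 1), (0, 2)}" by auto
  then show "eval2 ((map_poly pderiv ^^ i) ((pderiv ^^ j) P)) x t = 0"
    using assms by (auto simp: numeral_2_eq_2)
qed

lemma cubic_with_prescribed_jet:
  fixes t0 m m' m'' :: "'a::field_char_0"
  assumes "t0 \<noteq> 0"
  obtains c d e :: "'a \<Rightarrow> 'a" where
    "\<And>\<gamma>. c \<gamma> * t0^3 + d \<gamma> * t0^2 + e \<gamma> * t0 + \<gamma> = m"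
    "\<And>\<gamma>. 3 * c \<gamma> * t0^2 + 2 * d \<gamma> * t0 + e \<gamma> = m'"
    "\<And>\<gamma>. 6 * c \<gamma> * t0 + 2 * d \<gamma> = m''"
proof -
  \<comment> \<open>Taylor expansion at t0, the cubic coefficient being fixed by the constant term \<gamma>\<close>
  define c :: "'a \<Rightarrow> 'a" where "c \<gamma> = (m - m'*t0 + m''/2*t0^2 - \<gamma>) / t0^3" for \<gamma>
  define d :: "'a \<Rightarrow> 'a" where "d \<gamma> = m''/2 - 3*c \<gamma>*t0" for \<gamma>
  define e :: "'a \<Rightarrow> 'a" where "e \<gamma> = m' - m''*t0 + 3*c \<gamma>*t0^2" for \<gamma>
  show thesis
  proof (rule that)
    show "c \<gamma> * t0^3 + d \<gamma> * t0^2 + e \<gamma> * t0 + \<gamma> = m" for \<gamma>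
      using assms by (simp add: c_def d_def e_def field_simps) (simp add: algebra_simps power_def)
    show "3 * c \<gamma> * t0^2 + 2 * d \<gamma> * t0 + e \<gamma> = m'" for \<gamma>
      by (simp add: d_def e_def algebra_simps power2_eq_square)
    show "6 * c \<gamma> * t0 + 2 * d \<gamma> = m''" for \<gamma>
      by (simp add: d_def algebra_simps)
  qed
qed

lemma poly_trisec_h_const:
  "poly (trisec_h al be c d e h) [:t:] = [:c*t^3 + d*t^2 + e*t + h, al*t + be:]"
  "poly (pderiv (trisec_h al be c d e h)) [:t:] = [:3*c*t^2 + 2*d*t + e, al:]"
  "poly (pderiv (pderiv (trisec_h al be c d e h))) [:t:] = [:6*c*t + 2*d:]"
  by (simp_all add: trisec_h_def pderiv_pCons algebra_simps power2_eq_square power3_eq_cube)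

lemma eval2_trisec_h: "eval2 (trisec_h al be c d e h) x t = (al*t + be)*x + (c*t^3 + d*t^2 + e*t + h)"
  by (simp add: eval2_def trisec_h_def algebra_simps power2_eq_square power3_eq_cube)

lemma trisec_eqn_partials:
  fixes f g :: "'a::field_char_0 poly" and al be c d e h x t :: 'a
  defines "H \<equiv> trisec_eqn al be c d e h f g"
    and "l \<equiv> al*t + be"
    and "y \<equiv> (al*t + be)*x + (c*t^3 + d*t^2 + e*t + h)"
    and "y_t \<equiv> al*x + (3*c*t^2 + 2*d*t + e)"
  shows "eval2 H x t = y^2 - x^3 - poly f t * x - poly g t"
    and "eval2 (map_poly pderiv H) x t = 2*l*y - 3*x^2 - poly f t"
    and "eval2 (map_poly pderiv (map_poly pderiv H)) x t = 2*l^2 - 6*x"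
    and "eval2 (map_poly pderiv (map_poly pderiv (map_poly pderiv H))) x t = -6"
    and "eval2 (pderiv H) x t = 2*y*y_t - poly (pderiv f) t * x - poly (pderiv g) t"
    and "eval2 (map_poly pderiv (pderiv H)) x t = 2*al*y + 2*l*y_t - poly (pderiv f) t"
    and "eval2 (pderiv (pderiv H)) x t =
           2*y_t^2 + 2*y*(6*c*t + 2*d) - poly (pderiv (pderiv f)) t * x - poly (pderiv (pderiv g)) t"
  unfolding H_def trisec_eqn_def eval2_def poly_map_poly_pderiv_const
  by (simp_all add: pderiv_map_poly_smult[of "[:0, 1:]", simplified]
      pderiv_map_poly_smult[of 1, simplified] poly_map_poly_smult_const[of "[:0, 1:]", simplified]
      poly_map_poly_smult_const[of 1, simplified] l_def y_def y_t_def pderiv_diff pderiv_add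
      pderiv_mult pderiv_smult poly_trisec_h_const pderiv_pCons power2_eq_square power3_eq_cube
      algebra_simps)

lemma double_root_dvdD:
  fixes p :: "'a::idom poly"
  assumes "[:- t0, 1:] ^ 2 dvd p"
  shows "poly p t0 = 0" and "poly (pderiv p) t0 = 0"
proof -
  obtain k where "p = [:- t0, 1:] ^ 2 * k"
    using assms by (elim dvdE)
  then have p: "p = [:- t0, 1:] * ([:- t0, 1:] * k)"
    by (simp only: power2_eq_square mult.assoc)
  show "poly p t0 = 0" "poly (pderiv p) t0 = 0"
    unfolding p pderiv_mult by simp_all
qed

lemma poly_Fam_poly_at:
  fixes f g :: "'a::field_char_0 poly"
  assumes u: "u = a*t0 + b" "u \<noteq> 0"
    and x: "x = u^2/3" and y: "y = u^3/6 + poly f t0/(2*u)"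
  shows "poly (Fam_poly f g a b) t0 = u^2 * (x^3 + poly f t0 * x + poly g t0 - y^2)"
proof -
  have "poly (Fam_poly f g a b) t0 = u^8/108 + u^4 * poly f t0/6 + u^2 * poly g t0 - (poly f t0)^2/4"
    by (simp add: Fam_poly_def Let_def u(1) algebra_simps)
  also have "\<dots> = u^2 * (x^3 + poly f t0 * x + poly g t0 - y^2)"
    using u(2) by (simp add: x y field_simps) (simp add: algebra_simps power_def)
  finally show ?thesis .
qed

lemma poly_pderiv_Fam_poly_at:
  fixes f g :: "'a::field_char_0 poly"
  assumes u: "u = a*t0 + b" "u \<noteq> 0"
    and x: "x = u^2/3" and y: "y = u^3/6 + poly f t0/(2*u)"
  shows "poly (pderiv (Fam_poly f g a b)) t0 =
    u * (u * (poly (pderiv f) t0 * x + poly (pderiv g) t0) - poly (pderiv f) t0 * y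
         + 2*a*(x^3 + poly f t0 * x + poly g t0))"
proof -
  have "poly (pderiv (Fam_poly f g a b)) t0 = - poly f t0 * poly (pderiv f) t0 / 2
      + (4*a*u^3 * poly f t0 + u^4 * poly (pderiv f) t0)/6 + 2*a*u * poly g t0
      + u^2 * poly (pderiv g) t0 + 8*a*u^7/108"
    by (simp add: Fam_poly_def Let_def u(1) pderiv_add pderiv_diff pderiv_mult pderiv_smult pderiv_power
        pderiv_pCons algebra_simps)
  also have "\<dots> = u * (u * (poly (pderiv f) t0 * x + poly (pderiv g) t0) - poly (pderiv f) t0 * y
         + 2*a*(x^3 + poly f t0 * x + poly g t0))"
    using u(2) by (simp add: x y field_simps) (simp add: algebra_simps power_def)
  finally show ?thesis .
qed

lemma Fam_data_base_point:
  fixes f g :: "'a::field_char_0 poly"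
  assumes fam: "Fam_data f g a b t0"
    and u: "u = a*t0 + b" and x: "x = u^2/3" and y: "y = u^3/6 + poly f t0/(2*u)"
    and y_t: "y_t = (poly (pderiv f) t0 * x + poly (pderiv g) t0) / (2*y)"
  shows "u \<noteq> 0" and "y \<noteq> 0" and "y^2 = x^3 + poly f t0 * x + poly g t0"
    and "2*a*y + 2*u*y_t - poly (pderiv f) t0 = 0"
proof -
  have "poly f t0 \<noteq> - (u^4)/3" and double_root: "[:- t0, 1:] ^ 2 dvd Fam_poly f g a b"
    and "u \<noteq> 0"
    using fam by (auto simp: Fam_data_def u)
  then show "u \<noteq> 0"
    by blast
  have "6*u*y = u^4 + 3 * poly f t0"
    using \<open>u \<noteq> 0\<close> by (simp add: y field_simps) (simp add: algebra_simps power_def)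
  with \<open>poly f t0 \<noteq> - (u^4)/3\<close> show "y \<noteq> 0"
    by (auto simp: field_simps add_eq_0_iff2)
  show on_curve: "y^2 = x^3 + poly f t0 * x + poly g t0"
    using double_root_dvdD(1)[OF double_root] poly_Fam_poly_at[OF u \<open>u \<noteq> 0\<close> x y] \<open>u \<noteq> 0\<close>
    by simp
  have "0 = poly (pderiv (Fam_poly f g a b)) t0"
    using double_root_dvdD(2)[OF double_root] by simp
  also have "\<dots> = u * (u * (poly (pderiv f) t0 * x + poly (pderiv g) t0) - poly (pderiv f) t0 * y
      + 2*a*y^2)"
    by (simp add: poly_pderiv_Fam_poly_at[OF u \<open>u \<noteq> 0\<close> x y] on_curve)
  also have "\<dots> = u * (2*a*y + 2*u*y_t - poly (pderiv f) t0) * y"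
    using \<open>y \<noteq> 0\<close> by (simp add: y_t field_simps power2_eq_square)
  finally show "2*a*y + 2*u*y_t - poly (pderiv f) t0 = 0"
    using \<open>u \<noteq> 0\<close> \<open>y \<noteq> 0\<close> by simp
qed

lemma Fam_data_triple_point:
  fixes f g :: "'a::field_char_0 poly"
  assumes fam: "Fam_data f g a b t0"
    and u: "u = a*t0 + b" and x: "x = u^2/3" and y: "y = u^3/6 + poly f t0/(2*u)"
    and y_t: "y_t = (poly (pderiv f) t0 * x + poly (pderiv g) t0) / (2*y)"
    and y_tt: "y_tt = (poly (pderiv (pderiv f)) t0 * x + poly (pderiv (pderiv g)) t0 - 2*y_t^2) / (2*y)"
    and jet: "c*t0^3 + d*t0^2 + e*t0 + h = y - u*x" "3*c*t0^2 + 2*d*t0 + e = y_t - a*x"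
      "6*c*t0 + 2*d = y_tt"
  shows "triple_point (trisec_eqn a b c d e h f g) x t0"
proof -
  note base = Fam_data_base_point[OF fam u x y y_t]
  note partials = trisec_eqn_partials[of a b c d e h f g x t0, unfolded jet, folded u, simplified]
  have "2*u*y - 3*x^2 - poly f t0 = 0"
    using base(1) by (simp add: x y field_simps) (simp add: algebra_simps power_def)
  moreover have "2*u^2 - 6*x = 0"
    by (simp add: x)
  moreover have "2*y*y_t - poly (pderiv f) t0 * x - poly (pderiv g) t0 = 0"
    using base(2) by (simp add: y_t)
  moreover have "2*y_t^2 + 2*y*y_tt - poly (pderiv (pderiv f)) t0 * x - poly (pderiv (pderiv g)) t0 = 0"
    using base(2) by (simp add: y_tt)
  ultimately have "mult_ge (trisec_eqn a b c d e h f g) 3 x t0"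
    using base(3,4) by (intro mult_ge_3I) (simp_all add: partials)
  moreover have "\<not> mult_ge (trisec_eqn a b c d e h f g) 4 x t0"
    by (rule not_mult_geI[of 3 0]) (simp_all add: numeral_3_eq_3 partials)
  ultimately show ?thesis
    unfolding triple_point_def ..
qed

theorem lemma3p5:
  fixes K :: "'a::field_char_0 set" and f g :: "'a poly" and a b t0 :: 'a
  assumes "is_subfield K"
    and "\<forall>i. coeff f i \<in> K" and "\<forall>i. coeff g i \<in> K"
    and "degree f \<le> 4" and "degree g \<le> 6"
    and "Fam_data f g a b t0"
  shows "\<exists>c d e :: 'a \<Rightarrow> 'a. \<forall>\<gamma>.
           (let u = a * t0 + b; xQ = u ^ 2 / 3; yQ = u ^ 3 / 6 + poly f t0 / (2 * u) in
              yQ = eval2 (trisec_h a b (c \<gamma>) (d \<gamma>) (e \<gamma>) \<gamma>) xQ t0 \<and>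
              triple_point (trisec_eqn a b (c \<gamma>) (d \<gamma>) (e \<gamma>) \<gamma> f g) xQ t0)"
proof -
  define u where "u = a*t0 + b"
  define x where "x = u^2/3"
  define y where "y = u^3/6 + poly f t0/(2*u)"
  define y_t where "y_t = (poly (pderiv f) t0 * x + poly (pderiv g) t0) / (2*y)"
  define y_tt where "y_tt = (poly (pderiv (pderiv f)) t0 * x + poly (pderiv (pderiv g)) t0 - 2*y_t^2) / (2*y)"
  have "t0 \<noteq> 0"
    using assms(6) by (simp add: Fam_data_def)
  then obtain c d e where jet:
    "\<And>\<gamma>. c \<gamma> * t0^3 + d \<gamma> * t0^2 + e \<gamma> * t0 + \<gamma> = y - u*x"
    "\<And>\<gamma>. 3 * c \<gamma> * t0^2 + 2 * d \<gamma> * t0 + e \<gamma> = y_t - a*x"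
    "\<And>\<gamma>. 6 * c \<gamma> * t0 + 2 * d \<gamma> = y_tt"
    using cubic_with_prescribed_jet[OF \<open>t0 \<noteq> 0\<close>, where m = "y - u*x" and m' = "y_t - a*x" and m'' = y_tt]
    by blast
  have "y = eval2 (trisec_h a b (c \<gamma>) (d \<gamma>) (e \<gamma>) \<gamma>) x t0" for \<gamma>
    using jet(1)[of \<gamma>] by (simp add: eval2_trisec_h u_def algebra_simps)
  moreover have "triple_point (trisec_eqn a b (c \<gamma>) (d \<gamma>) (e \<gamma>) \<gamma> f g) x t0" for \<gamma>
    using assms(6) u_def x_def y_def y_t_def y_tt_def jet by (rule Fam_data_triple_point)
  ultimately show ?thesis
    unfolding u_def x_def y_def Let_def by blast
qed

end
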